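(* For a parameter vector $(a_1,a_2,b_0,b_1,b_2,s_1,s_2)$ with $h_k=a_1q^k+a_2q^{-k}$ pairwise distinct (over $k\geq -1$), let $(\{\alpha_n\}_{n\geq1},\{\beta_n\}_{n\geq0})$ be the recurrence coefficient sequences defined from it. Let $P=(a_1,a_2,b_0,0,0,s_1,s_2)$. (i) If $a_2\neq 0$, then $P$ and $P_1=(a_1,a_2,b_0,b_1,0,\hat s_1,\hat s_2)$, where $b_1=-\frac{b_0a_2+s_2}{a_2}$, $\hat s_1=\frac{qs_1-b_0a_2-s_2}{q}$, $\hat s_2=-b_0a_2$, yield the same pair of sequences $(\alpha_n,\beta_n)$. (ii) If $a_1\neq 0$, then $P$ and $P_2=(a_1,a_2,b_0,0,b_2,\tilde s_1,\tilde s_2)$, where $b_2=-\frac{b_0a_1+s_1}{a_1}$, $\tilde s_1=-b_0a_1$, $\tilde s_2=s_2-qa_1b_0-qs_1$, yield the same pair of sequences $(\alpha_n,\beta_n)$.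
   Context: Fix $q\in\mathbb{C}$ with $q\neq 0$ and $|q|\neq 1$. Given a parameter vector $(a_1,a_2,b_0,b_1,b_2,s_1,s_2)\in\mathbb{C}^7$, put $s_0=-s_1-s_2$ and define for integers $k$: $x_k=b_0+b_1q^k+b_2q^{-k}$, $h_k=a_1q^k+a_2q^{-k}$, $d_k=s_0+s_1q^k+s_2q^{-k}$, $g_0=0$, $g_k=x_{k-1}(h_k-h_0)+d_k$ for $k\geq1$. The recurrence coefficients are $$\alpha_n=\frac{g_n}{h_{n-1}-h_n}\left(\frac{g_{n-1}}{h_{n-2}-h_n}-\frac{g_n}{h_{n-1}-h_n}+\frac{g_{n+1}}{h_{n-1}-h_{n+1}}+x_n-x_{n-1}\right),\ n\geq1,\qquad \beta_n=x_n+\frac{g_{n+1}}{h_n-h_{n+1}}-\frac{g_n}{h_{n-1}-h_n},\ n\geq0,$$ where any term containing the factor $g_0=0$ is taken to be $0$. (These are the coefficients of the three-term recurrence $u_{n+1}=(t-\beta_n)u_n-\alpha_nu_{n-1}$ satisfied by the monic polynomials $u_n$ determined by the parameters.) *)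

theory Defs
  imports Complex_Main
begin

type_synonym param = "complex \<times> complex \<times> complex \<times> complex \<times> complex \<times> complex \<times> complex"

definition xk :: "complex \<Rightarrow> param \<Rightarrow> int \<Rightarrow> complex" where
  "xk q P k = (case P of (a1, a2, b0, b1, b2, s1, s2) \<Rightarrow> b0 + b1 * q powi k + b2 * q powi (-k))"

definition hk :: "complex \<Rightarrow> param \<Rightarrow> int \<Rightarrow> complex" where
  "hk q P k = (case P of (a1, a2, b0, b1, b2, s1, s2) \<Rightarrow> a1 * q powi k + a2 * q powi (-k))"

definition dk :: "complex \<Rightarrow> param \<Rightarrow> int \<Rightarrow> complex" where
  "dk q P k = (case P of (a1, a2, b0, b1, b2, s1, s2) \<Rightarrow>
      (- s1 - s2) + s1 * q powi k + s2 * q powi (-k))"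

definition gk :: "complex \<Rightarrow> param \<Rightarrow> nat \<Rightarrow> complex" where
  "gk q P k = (if k = 0 then 0
      else xk q P (int k - 1) * (hk q P (int k) - hk q P 0) + dk q P (int k))"

text \<open>alpha_n for n >= 1. For n = 1 the first inner term contains g_0 = 0 and is
  0 (division by anything of 0 is 0 in Isabelle).\<close>
definition alpha :: "complex \<Rightarrow> param \<Rightarrow> nat \<Rightarrow> complex" where
  "alpha q P n =
     gk q P n / (hk q P (int n - 1) - hk q P (int n)) *
     (gk q P (n - 1) / (hk q P (int n - 2) - hk q P (int n))
      - gk q P n / (hk q P (int n - 1) - hk q P (int n))
      + gk q P (n + 1) / (hk q P (int n - 1) - hk q P (int n + 1))
      + xk q P (int n) - xk q P (int n - 1))"

text \<open>beta_n for n >= 0. For n = 0 the last term contains g_0 = 0 and is 0.\<close>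
definition beta :: "complex \<Rightarrow> param \<Rightarrow> nat \<Rightarrow> complex" where
  "beta q P n =
     xk q P (int n) + gk q P (n + 1) / (hk q P (int n) - hk q P (int n + 1))
     - gk q P n / (hk q P (int n - 1) - hk q P (int n))"

definition same_coeffs :: "complex \<Rightarrow> param \<Rightarrow> param \<Rightarrow> bool" where
  "same_coeffs q P Q \<longleftrightarrow> (\<forall>n\<ge>1. alpha q P n = alpha q Q n) \<and> (\<forall>n. beta q P n = beta q Q n)"

end

theory Submission
  imports Defs
begin

text \<open>Part (ii) is part (i) in disguise: the coefficients only involve the sequences x, h, d,
  and these are unchanged when q is replaced by 1/q and the roles of (a1, b1, s1) and
  (a2, b2, s2) are exchanged.

  For part (i), write s2 = -a2 (b0 + b1) and A = b0 a1 + s1. Then g_k = (q^k - 1)(A + a2 b1 q^-k)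
  before and g_k = (q^k - 1)(A + a1 b1 q^(k-1)) after the shift, while
  h_(k-1) - h_k = (1 - q)(a1 q^(k-1) - a2 q^-k). So the shift adds b1 (q^k - 1)/(1 - q) to
  g_k / (h_(k-1) - h_k), which in beta_n telescopes against the change b1 q^n of x_n.
  For alpha_n, once the denominators (nonzero as the h_k are distinct) are cleared, the claim
  is a polynomial identity in q, 1/q, q^n and q^-n.\<close>

definition swap_param :: "param \<Rightarrow> param" where
  "swap_param = (\<lambda>(a1, a2, b0, b1, b2, s1, s2). (a2, a1, b0, b2, b1, s2, s1))"

lemma xk_swap_param: "xk (inverse q) (swap_param P) k = xk q P k"
  by (cases P) (simp add: xk_def swap_param_def power_int_inverse power_int_minus)

lemma hk_swap_param: "hk (inverse q) (swap_param P) k = hk q P k"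
  by (cases P) (simp add: hk_def swap_param_def power_int_inverse power_int_minus)

lemma dk_swap_param: "dk (inverse q) (swap_param P) k = dk q P k"
  by (cases P) (simp add: dk_def swap_param_def power_int_inverse power_int_minus)

lemma same_coeffs_swap_param:
  "same_coeffs (inverse q) (swap_param P) (swap_param Q) \<longleftrightarrow> same_coeffs q P Q"
  by (simp add: same_coeffs_def alpha_def beta_def gk_def xk_swap_param hk_swap_param dk_swap_param)

lemma alpha_mult_denominators:
  fixes q :: complex and P :: param and n :: nat
  defines "D1 \<equiv> hk q P (int n - 1) - hk q P n"
    and "D2 \<equiv> hk q P (int n - 2) - hk q P n"
    and "D3 \<equiv> hk q P (int n - 1) - hk q P (int n + 1)"
  assumes "D1 \<noteq> 0" "D2 \<noteq> 0" "D3 \<noteq> 0"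
  shows "alpha q P n * (D1\<^sup>2 * D2 * D3)
    = gk q P n * (gk q P (n - 1) * D1 * D3 - gk q P n * D2 * D3 + gk q P (n + 1) * D1 * D2
                  + (xk q P n - xk q P (int n - 1)) * D1 * D2 * D3)"
proof -
  have "A / D1 * (B / D2 - A / D1 + C / D3 + X1 - X0) * (D1\<^sup>2 * D2 * D3)
      = A * (B * D1 * D3 - A * D2 * D3 + C * D1 * D2 + (X1 - X0) * D1 * D2 * D3)" for A B C X1 X0
    using assms(4-6) by (simp add: field_simps power2_eq_square)
  then show ?thesis
    unfolding alpha_def D1_def D2_def D3_def .
qed

context
  fixes q a1 a2 b0 b1 s1 :: complex
begin

text \<open>The pair of part (i), parametrised by \<open>b1\<close> rather than by \<open>s2 = - a2 * (b0 + b1)\<close>,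
  so that \<open>a2 \<noteq> 0\<close> is not needed.\<close>

private abbreviation "unshifted \<equiv> (a1, a2, b0, 0, 0, s1, - a2 * (b0 + b1))"
private abbreviation "shifted \<equiv> (a1, a2, b0, b1, 0, s1 + a2 * b1 / q, - b0 * a2)"

lemma hk_b1_shifted: "hk q shifted k = hk q unshifted k"
  by (simp add: hk_def)

lemma hk_unshifted: "hk q unshifted k = a1 * q powi k + a2 * q powi (- k)"
  by (simp add: hk_def)

lemma xk_unshifted: "xk q unshifted k = b0"
  by (simp add: xk_def)

lemma xk_b1_shifted: "xk q shifted k = xk q unshifted k + b1 * q powi k"
  by (simp add: xk_def)

lemma gk_unshifted:
  assumes "q \<noteq> 0"
  shows "gk q unshifted k = (q powi k - 1) * (b0 * a1 + s1 + a2 * b1 * q powi (- k))"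
  using assms by (simp add: gk_def xk_def hk_def dk_def power_int_minus field_simps)

lemma gk_b1_shifted:
  assumes "q \<noteq> 0"
  shows "gk q shifted k = (q powi k - 1) * (b0 * a1 + s1 + a1 * b1 * q powi (int k - 1))"
  using assms
  by (simp add: gk_def xk_def hk_def dk_def power_int_minus power_int_diff field_simps)

lemma gk_ratio_b1_shifted:
  assumes q: "q \<noteq> 0" "q \<noteq> 1" and h: "hk q unshifted (int k - 1) \<noteq> hk q unshifted k"
  shows "gk q shifted k / (hk q unshifted (int k - 1) - hk q unshifted k)
    = gk q unshifted k / (hk q unshifted (int k - 1) - hk q unshifted k)
      + b1 * (q powi k - 1) / (1 - q)"
proof -
  define K where "K = a1 * q powi (int k - 1) - a2 * q powi (- k)"
  have diff: "hk q unshifted (int k - 1) - hk q unshifted k = (1 - q) * K"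
    using q by (simp add: K_def hk_def power_int_minus power_int_diff field_simps)
  have shift: "gk q shifted k = gk q unshifted k + b1 * (q powi k - 1) * K"
    unfolding gk_unshifted[OF q(1)] gk_b1_shifted[OF q(1)]
    using q by (simp add: K_def power_int_minus power_int_diff field_simps)
  have "K \<noteq> 0"
    using h diff by auto
  then show ?thesis
    unfolding diff shift add_divide_distrib by simp
qed

lemma beta_b1_shifted:
  assumes q: "q \<noteq> 0" "q \<noteq> 1"
    and h: "hk q unshifted (int n - 1) \<noteq> hk q unshifted n"
      "hk q unshifted n \<noteq> hk q unshifted (int n + 1)"
  shows "beta q shifted n = beta q unshifted n"
proof -
  have ratio_next: "gk q shifted (n + 1) / (hk q unshifted n - hk q unshifted (int n + 1))
      = gk q unshifted (n + 1) / (hk q unshifted n - hk q unshifted (int n + 1))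
        + b1 * (q powi (int n + 1) - 1) / (1 - q)"
  proof -
    have "hk q unshifted (int (n + 1) - 1) \<noteq> hk q unshifted (int (n + 1))"
      using h(2) by (simp add: add.commute)
    from gk_ratio_b1_shifted[OF q this] show ?thesis
      by (simp only: of_nat_add of_nat_1 add_diff_cancel_right')
  qed
  have telescope:
    "b1 * q powi n + b1 * (q powi (int n + 1) - 1) / (1 - q) - b1 * (q powi n - 1) / (1 - q) = 0"
    using q by (simp add: power_int_add field_simps)
  show ?thesis
    unfolding beta_def hk_b1_shifted xk_b1_shifted ratio_next gk_ratio_b1_shifted[OF q h(1)]
    using telescope by (simp add: algebra_simps)
qed

lemma alpha_b1_shifted:
  assumes q: "q \<noteq> 0" and n: "n \<ge> 1"
  defines "D1 \<equiv> hk q unshifted (int n - 1) - hk q unshifted n"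
    and "D2 \<equiv> hk q unshifted (int n - 2) - hk q unshifted n"
    and "D3 \<equiv> hk q unshifted (int n - 1) - hk q unshifted (int n + 1)"
  assumes D: "D1 \<noteq> 0" "D2 \<noteq> 0" "D3 \<noteq> 0"
  shows "alpha q shifted n = alpha q unshifted n"
proof -
  define z where "z = q powi n"
  have z: "z \<noteq> 0"
    using q by (simp add: z_def)
  have powers:
    "q powi (int n - 1) = z * inverse q" "q powi (int n - 1 - 1) = z * inverse q ^ 2"
    "q powi (int n - 2) = z * inverse q ^ 2" "q powi (int n + 1) = z * q"
    "q powi (- int n) = inverse z" "q powi (- (int n - 1)) = q * inverse z"
    "q powi (- (int n - 2)) = q ^ 2 * inverse z" "q powi (- (int n + 1)) = inverse z * inverse q"
    "q powi (int n + 1 - 1) = z"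
    using q by (simp_all add: z_def power_int_diff power_int_add power_int_minus field_simps)
  have index: "int (n - 1) = int n - 1" "int (n + 1) = int n + 1"
    using n by simp_all
  have inverses: "q * inverse q = 1" "z * inverse z = 1"
    using q z by simp_all
  note cleared_unshifted =
    alpha_mult_denominators[of q unshifted n, OF D[unfolded D1_def D2_def D3_def]]
  note cleared_shifted = alpha_mult_denominators[of q shifted n,
      OF D[unfolded D1_def D2_def D3_def hk_b1_shifted[symmetric]], unfolded hk_b1_shifted]
  have "alpha q shifted n * (D1\<^sup>2 * D2 * D3) = alpha q unshifted n * (D1\<^sup>2 * D2 * D3)"
    unfolding D1_def D2_def D3_def cleared_unshifted cleared_shifted xk_b1_shifted
    unfolding gk_unshifted[OF q] gk_b1_shifted[OF q] hk_unshifted xk_unshifted index powers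
      z_def[symmetric]
    using inverses by algebra
  then show ?thesis
    using D by simp
qed

lemma same_coeffs_b1_shifted:
  assumes "q \<noteq> 0" and inj: "inj_on (\<lambda>k. a1 * q powi k + a2 * q powi (- k)) {-1..}"
  shows "same_coeffs q unshifted shifted"
proof -
  have hk_ne: "hk q unshifted j \<noteq> hk q unshifted k" if "j \<ge> -1" "k \<ge> -1" "j \<noteq> k" for j k
    using inj that by (auto simp: hk_def dest: inj_onD)
  have "q \<noteq> 1"
    using hk_ne[of 0 1] by (auto simp: hk_def)
  show ?thesis
    unfolding same_coeffs_def
    using alpha_b1_shifted beta_b1_shifted hk_ne assms \<open>q \<noteq> 1\<close> by simp
qed

end

theorem mainTheorem9:
  fixes q a1 a2 b0 s1 s2 :: complex
  assumes hq0: "q \<noteq> 0" and hq1: "norm q \<noteq> 1"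
    and hdist: "\<And>j k :: int. j \<ge> -1 \<Longrightarrow> k \<ge> -1 \<Longrightarrow> j \<noteq> k \<Longrightarrow>
                  a1 * q powi j + a2 * q powi (-j) \<noteq> a1 * q powi k + a2 * q powi (-k)"
  shows "(a2 \<noteq> 0 \<longrightarrow>
            same_coeffs q (a1, a2, b0, 0, 0, s1, s2)
              (a1, a2, b0, - (b0 * a2 + s2) / a2, 0, (q * s1 - b0 * a2 - s2) / q, - b0 * a2))
       \<and> (a1 \<noteq> 0 \<longrightarrow>
            same_coeffs q (a1, a2, b0, 0, 0, s1, s2)
              (a1, a2, b0, 0, - (b0 * a1 + s1) / a1, - b0 * a1, s2 - q * a1 * b0 - q * s1))"
proof (intro conjI impI)
  have inj: "inj_on (\<lambda>k. a1 * q powi k + a2 * q powi (- k)) {-1..}"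
    by (rule inj_onI) (use hdist in fastforce)
  show "same_coeffs q (a1, a2, b0, 0, 0, s1, s2)
          (a1, a2, b0, - (b0 * a2 + s2) / a2, 0, (q * s1 - b0 * a2 - s2) / q, - b0 * a2)"
    if "a2 \<noteq> 0"
  proof -
    define b1 where "b1 = - (b0 * a2 + s2) / a2"
    have "same_coeffs q (a1, a2, b0, 0, 0, s1, - a2 * (b0 + b1))
        (a1, a2, b0, b1, 0, s1 + a2 * b1 / q, - b0 * a2)"
      by (rule same_coeffs_b1_shifted[OF hq0 inj])
    moreover have "- a2 * (b0 + b1) = s2" "s1 + a2 * b1 / q = (q * s1 - b0 * a2 - s2) / q"
      using \<open>a2 \<noteq> 0\<close> hq0 by (simp_all add: b1_def field_simps)
    ultimately show "same_coeffs q (a1, a2, b0, 0, 0, s1, s2)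
        (a1, a2, b0, b1, 0, (q * s1 - b0 * a2 - s2) / q, - b0 * a2)"
      by simp
  qed
  show "same_coeffs q (a1, a2, b0, 0, 0, s1, s2)
          (a1, a2, b0, 0, - (b0 * a1 + s1) / a1, - b0 * a1, s2 - q * a1 * b0 - q * s1)"
    if "a1 \<noteq> 0"
  proof (rule same_coeffs_swap_param[THEN iffD1])
    define b2 where "b2 = - (b0 * a1 + s1) / a1"
    have "inj_on (\<lambda>k. a2 * inverse q powi k + a1 * inverse q powi (- k)) {-1..}"
      using inj by (simp add: power_int_inverse power_int_minus add.commute)
    then have "same_coeffs (inverse q) (a2, a1, b0, 0, 0, s2, - a1 * (b0 + b2))
        (a2, a1, b0, b2, 0, s2 + a1 * b2 / inverse q, - b0 * a1)"
      by (rule same_coeffs_b1_shifted[rotated]) (use hq0 in simp)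
    moreover have "- a1 * (b0 + b2) = s1" "s2 + a1 * b2 / inverse q = s2 - q * a1 * b0 - q * s1"
      using \<open>a1 \<noteq> 0\<close> by (simp_all add: b2_def field_simps)
    ultimately show "same_coeffs (inverse q) (swap_param (a1, a2, b0, 0, 0, s1, s2))
        (swap_param (a1, a2, b0, 0, b2, - b0 * a1, s2 - q * a1 * b0 - q * s1))"
      by (simp add: swap_param_def)
  qed
qed

end
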